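(* Let $(\mathfrak{g},[\cdot,\ldots,\cdot],\varepsilon,\alpha)$ be an $n$-Hom-Lie color algebra with $n\geq3$, let $p$ be a positive integer with $p<n$, and let $a_1,\ldots,a_p\in\mathfrak{g}_0$ satisfy $\alpha(a_i)=a_i$ for all $i\in\{1,\ldots,p\}$. Then $(\mathfrak{g},\{\cdot,\ldots,\cdot\},\varepsilon,\alpha)$ is an $(n-p)$-Hom-Lie color algebra, where $\{x_1,\ldots,x_{n-p}\}=[a_1,\ldots,a_p,x_1,\ldots,x_{n-p}]$ for all $x_1,\ldots,x_{n-p}\in\mathfrak{g}$.
   Context: $\mathbb{K}$ is a field of characteristic zero and $\Gamma$ an abelian group with neutral element $0$; $\mathfrak{g}_0$ is the degree-$0$ component. A bicharacter is a map $\varepsilon:\Gamma\times\Gamma\to\mathbb{K}\setminus\{0\}$ with $\varepsilon(a,b)\varepsilon(b,a)=1$, $\varepsilon(a,b+c)=\varepsilon(a,b)\varepsilon(a,c)$, $\varepsilon(a+b,c)=\varepsilon(a,c)\varepsilon(b,c)$. For homogeneous $x,y$, $\varepsilon(x,y)=\varepsilon(|x|,|y|)$ and $\varepsilon(x,y_1+\dots+y_k)=\varepsilon(|x|,|y_1|+\dots+|y_k|)$ ($=1$ for an empty sum). An $m$-Hom-Lie color algebra $(\mathfrak{g},[\cdot,\ldots,\cdot],\varepsilon,\alpha)$ is a $\Gamma$-graded vector space with an $m$-linear bracket of degree zero, a bicharacter $\varepsilon$ and a degree-zero linear map $\alpha$ such that for homogeneous elements: (i) $[x_1,\ldots,x_i,x_{i+1},\ldots,x_m]=-\varepsilon(x_i,x_{i+1})[x_1,\ldots,x_{i+1},x_i,\ldots,x_m]$;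 (ii) $[\alpha(x_1),\ldots,\alpha(x_{m-1}),[y_1,\ldots,y_m]]=\sum_{i=1}^m\varepsilon(x_1+\dots+x_{m-1},y_1+\dots+y_{i-1})[\alpha(y_1),\ldots,\alpha(y_{i-1}),[x_1,\ldots,x_{m-1},y_i],\alpha(y_{i+1}),\ldots,\alpha(y_m)]$. *)

theory Defs
  imports Complex_Main
begin

text \<open>A \<Gamma>-graded vector space over a field 'k: carrier type 'v with scalar
multiplication smult, grading given by the homogeneous components G a (a :: 'g).\<close>

definition graded_vs :: "('k::field \<Rightarrow> 'v::ab_group_add \<Rightarrow> 'v) \<Rightarrow> ('g::ab_group_add \<Rightarrow> 'v set) \<Rightarrow> bool" where
  "graded_vs smult G \<longleftrightarrow>
     vector_space smult \<and>
     (\<forall>a. 0 \<in> G a \<and> (\<forall>x\<in>G a. \<forall>y\<in>G a. x + y \<in> G a) \<and> (\<forall>c. \<forall>x\<in>G a. smult c x \<in> G a)) \<and>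
     (\<forall>v. \<exists>!c. finite {a. c a \<noteq> 0} \<and> (\<forall>a. c a \<in> G a) \<and> v = (\<Sum>a\<in>{a. c a \<noteq> 0}. c a))"

definition bicharacter :: "('g::ab_group_add \<Rightarrow> 'g \<Rightarrow> 'k::field) \<Rightarrow> bool" where
  "bicharacter eps \<longleftrightarrow>
     (\<forall>a b. eps a b \<noteq> 0) \<and>
     (\<forall>a b. eps a b * eps b a = 1) \<and>
     (\<forall>a b c. eps a (b + c) = eps a b * eps a c) \<and>
     (\<forall>a b c. eps (a + b) c = eps a c * eps b c)"

definition homog_list :: "('g \<Rightarrow> 'v set) \<Rightarrow> 'v list \<Rightarrow> 'g list \<Rightarrow> bool" where
  "homog_list G xs ds \<longleftrightarrow> length xs = length ds \<and> (\<forall>j<length xs. xs ! j \<in> G (ds ! j))"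

definition swap_adj :: "nat \<Rightarrow> 'a list \<Rightarrow> 'a list" where
  "swap_adj i xs = xs[i := xs ! Suc i, Suc i := xs ! i]"

text \<open>m-Hom-Lie color algebra (g, br, eps, alpha); the m-ary bracket is a function
on lists, only its values on lists of length m matter.\<close>
definition hom_lie_color ::
  "nat \<Rightarrow> ('k::field \<Rightarrow> 'v::ab_group_add \<Rightarrow> 'v) \<Rightarrow> ('g::ab_group_add \<Rightarrow> 'v set)
   \<Rightarrow> ('v list \<Rightarrow> 'v) \<Rightarrow> ('g \<Rightarrow> 'g \<Rightarrow> 'k) \<Rightarrow> ('v \<Rightarrow> 'v) \<Rightarrow> bool" where
  "hom_lie_color m smult G br eps alpha \<longleftrightarrow>
     graded_vs smult G \<and>
     bicharacter eps \<and>
     \<comment> \<open>the bracket is m-linear\<close>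
     (\<forall>xs i. length xs = m \<longrightarrow> i < m \<longrightarrow> Vector_Spaces.linear smult smult (\<lambda>v. br (xs[i := v]))) \<and>
     \<comment> \<open>the bracket has degree zero\<close>
     (\<forall>xs ds. length xs = m \<longrightarrow> homog_list G xs ds \<longrightarrow> br xs \<in> G (sum_list ds)) \<and>
     \<comment> \<open>alpha is linear of degree zero\<close>
     Vector_Spaces.linear smult smult alpha \<and>
     (\<forall>a. alpha ` G a \<subseteq> G a) \<and>
     \<comment> \<open>(i) epsilon-skew-symmetry\<close>
     (\<forall>xs ds i. length xs = m \<longrightarrow> homog_list G xs ds \<longrightarrow> Suc i < m \<longrightarrow>
        br xs = - smult (eps (ds ! i) (ds ! Suc i)) (br (swap_adj i xs))) \<and>
     \<comment> \<open>(ii) epsilon-Hom-Nambu-Filippov identity\<close>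
     (\<forall>xs dx ys dy. length xs = m - 1 \<longrightarrow> length ys = m \<longrightarrow>
        homog_list G xs dx \<longrightarrow> homog_list G ys dy \<longrightarrow>
        br (map alpha xs @ [br ys]) =
        (\<Sum>i<m. smult (eps (sum_list dx) (sum_list (take i dy)))
            (br (map alpha (take i ys) @ [br (xs @ [ys ! i])] @ map alpha (drop (Suc i) ys)))))"

end

theory Submission
  imports Defs
begin

text \<open>Fixed degree-zero entries \<open>a\<^sub>1, \<dots>, a\<^sub>p\<close> carry no degree and are never swapped, so
multilinearity, degree and \<open>\<epsilon>\<close>-skew-symmetry pass to the shorter bracket. In the
\<open>\<epsilon>\<close>-Hom-Nambu-Filippov identity for \<open>n\<close> entries with \<open>a\<^sub>1, \<dots>, a\<^sub>p\<close> in front of both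
argument lists, the \<open>\<alpha>\<close>'s act trivially on the \<open>a\<^sub>i\<close> and the twisting factors lose their
\<open>a\<^sub>i\<close>-contributions; the \<open>i\<close>-th summand with \<open>i \<le> p\<close> contains the inner bracket
\<open>[a\<^sub>1, \<dots>, a\<^sub>p, x\<^sub>1, \<dots>, x\<^sub>n\<^sub>-\<^sub>p\<^sub>-\<^sub>1, a\<^sub>i]\<close>, which vanishes because the degree-zero entry \<open>a\<^sub>i\<close>
occurs twice and \<open>\<epsilon>(0, 0) = 1\<close>. The remaining summands form the identity for the
\<open>(n - p)\<close>-ary bracket.\<close>

lemma eq_neg_self_imp_zero:
  fixes smult :: "'k::field \<Rightarrow> 'v::ab_group_add \<Rightarrow> 'v"
    and v :: 'v
  assumes "vector_space smult" and "(2::'k) \<noteq> 0" and "v = - v"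
  shows "v = 0"
proof -
  interpret vector_space smult by fact
  have "smult 2 v = v + v"
    by (metis one_add_one scale_left_distrib scale_one)
  also have "\<dots> = 0"
    using \<open>v = - v\<close> by (metis add.right_inverse)
  finally show ?thesis
    using assms(2) by simp
qed

lemma bicharacter_zero_left:
  assumes "bicharacter eps"
  shows "eps 0 b = 1"
proof -
  have "eps 0 b = eps 0 b * eps 0 b"
    using assms unfolding bicharacter_def by (metis add_0)
  moreover have "eps 0 b \<noteq> 0"
    using assms unfolding bicharacter_def by blast
  ultimately show ?thesis
    by simp
qed

lemma homog_list_append:
  "homog_list G xs ds \<Longrightarrow> homog_list G ys es \<Longrightarrow> homog_list G (xs @ ys) (ds @ es)"
  unfolding homog_list_def by (auto simp: nth_append)

lemma homog_list_zero_iff: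
  "homog_list G xs (map (\<lambda>_. 0) xs) \<longleftrightarrow> set xs \<subseteq> G 0"
  unfolding homog_list_def by (force simp: in_set_conv_nth)

lemma length_swap_adj [simp]: "length (swap_adj i xs) = length xs"
  unfolding swap_adj_def by simp

lemma swap_adj_append:
  "swap_adj (length as + i) (as @ xs) = as @ swap_adj i xs"
  unfolding swap_adj_def by (simp add: list_update_append nth_append)

lemma homog_list_swap_adj:
  assumes "homog_list G xs ds" and "Suc i < length xs"
  shows "homog_list G (swap_adj i xs) (swap_adj i ds)"
  using assms unfolding homog_list_def swap_adj_def by (auto simp: nth_list_update)

locale hom_lie_color_algebra =
  fixes n :: nat
    and smult :: "'k::field \<Rightarrow> 'v::ab_group_add \<Rightarrow> 'v"
    and G :: "'g::ab_group_add \<Rightarrow> 'v set"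
    and br :: "'v list \<Rightarrow> 'v"
    and eps :: "'g \<Rightarrow> 'g \<Rightarrow> 'k"
    and alpha :: "'v \<Rightarrow> 'v"
  assumes hom_lie_color: "hom_lie_color n smult G br eps alpha"
begin

lemma graded_vs: "graded_vs smult G"
  and bicharacter: "bicharacter eps"
  and multilinear:
    "\<lbrakk>length xs = n; i < n\<rbrakk> \<Longrightarrow> Vector_Spaces.linear smult smult (\<lambda>v. br (xs[i := v]))"
  and bracket_degree: "\<lbrakk>length xs = n; homog_list G xs ds\<rbrakk> \<Longrightarrow> br xs \<in> G (sum_list ds)"
  and linear_alpha: "Vector_Spaces.linear smult smult alpha"
  and alpha_degree: "alpha ` G a \<subseteq> G a"
  and skew: "\<lbrakk>length xs = n; homog_list G xs ds; Suc i < n\<rbrakk> \<Longrightarrow>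
      br xs = - smult (eps (ds ! i) (ds ! Suc i)) (br (swap_adj i xs))"
  and filippov: "\<lbrakk>length xs = n - 1; length ys = n; homog_list G xs dx; homog_list G ys dy\<rbrakk> \<Longrightarrow>
      br (map alpha xs @ [br ys]) =
      (\<Sum>i<n. smult (eps (sum_list dx) (sum_list (take i dy)))
          (br (map alpha (take i ys) @ [br (xs @ [ys ! i])] @ map alpha (drop (Suc i) ys))))"
  using hom_lie_color unfolding hom_lie_color_def by blast+

sublocale vector_space smult
  using graded_vs unfolding graded_vs_def by blast

lemma bracket_eq_zero_if_zero_entry:
  assumes "length xs = n" and "i < n" and "xs ! i = 0"
  shows "br xs = 0"
proof -
  have "br (xs[i := 0]) = 0"
    using module_hom.zero multilinear[OF assms(1,2)] module_hom_iff_linear by fastforce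
  with assms(3) show ?thesis
    by (metis list_update_id)
qed

text \<open>The repeated entry is moved next to its copy by adjacent swaps, each of which only multiplies
the bracket by a scalar; swapping the two equal neighbours then gives \<open>v = -v\<close> as \<open>\<epsilon>(d, d) = 1\<close>.\<close>

lemma bracket_eq_zero_if_repeated_entry:
  assumes "(2::'k) \<noteq> 0"
    and "length zs = n" and "homog_list G zs ds" and "j < k" and "k < n"
    and "zs ! j = zs ! k" and "ds ! j = ds ! k" and "eps (ds ! k) (ds ! k) = 1"
  shows "br zs = 0"
  using assms(2-)
proof (induction k arbitrary: zs ds)
  case 0
  then show ?case by simp
next
  case (Suc i zs ds)
  have length_ds: "length ds = n"
    using Suc.prems(1,2) unfolding homog_list_def by simp
  show ?case
  proof (cases "i = j")
    case True
    then have "swap_adj i zs = zs"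
      using Suc.prems(5) unfolding swap_adj_def by (metis list_update_id)
    then have "br zs = - br zs"
      using skew[OF Suc.prems(1,2), of i] Suc.prems(4,6,7) \<open>i = j\<close> by simp
    then show ?thesis
      using eq_neg_self_imp_zero[OF vector_space_axioms assms(1)] by blast
  next
    case False
    let ?zs = "swap_adj i zs" and ?ds = "swap_adj i ds"
    have "br ?zs = 0"
    proof (rule Suc.IH)
      show "length ?zs = n" "homog_list G ?zs ?ds" "j < i" "i < n"
        using Suc.prems homog_list_swap_adj[OF Suc.prems(2)] False by auto
      show "?zs ! j = ?zs ! i" "?ds ! j = ?ds ! i" "eps (?ds ! i) (?ds ! i) = 1"
        using Suc.prems length_ds False unfolding swap_adj_def by (auto simp: nth_list_update)
    qed
    then show ?thesis
      using skew[OF Suc.prems(1,2), of i] Suc.prems(4) by simp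
  qed
qed

context
  fixes as :: "'v list"
  assumes length_as: "length as < n"
begin

lemma prefix_multilinear:
  assumes "length xs = n - length as" and "i < n - length as"
  shows "Vector_Spaces.linear smult smult (\<lambda>v. br (as @ xs[i := v]))"
  using multilinear[of "as @ xs" "length as + i"] assms by (simp add: list_update_append)

lemma prefix_bracket_degree:
  assumes "set as \<subseteq> G 0" and "length xs = n - length as" and "homog_list G xs ds"
  shows "br (as @ xs) \<in> G (sum_list ds)"
proof -
  have "homog_list G (as @ xs) (map (\<lambda>_. 0) as @ ds)"
    using homog_list_append assms(1,3) homog_list_zero_iff by blast
  from bracket_degree[OF _ this] show ?thesis
    using assms(2) length_as by simp
qed

lemma prefix_skew:
  assumes "homog_list G as das"
    and "length xs = n - length as" and "homog_list G xs ds" and "Suc i < n - length as"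
  shows "br (as @ xs) = - smult (eps (ds ! i) (ds ! Suc i)) (br (as @ swap_adj i xs))"
proof -
  have "length das = length as"
    using assms(1) unfolding homog_list_def by simp
  then show ?thesis
    using skew[OF _ homog_list_append[OF assms(1,3)], of "length as + i"] assms(2,4) length_as
    by (simp add: nth_append swap_adj_append)
qed

lemma prefix_entry_repeated_eq_zero:
  assumes "(2::'k) \<noteq> 0" and "set as \<subseteq> G 0"
    and "length xs = n - length as - 1" and "homog_list G xs dx" and "i < length as"
  shows "br (as @ xs @ [as ! i]) = 0"
proof (rule bracket_eq_zero_if_repeated_entry)
  let ?ds = "map (\<lambda>_. 0) as @ dx @ [0]"
  show "homog_list G (as @ xs @ [as ! i]) ?ds"
    using assms(2,4,5) by (intro homog_list_append) (auto simp: homog_list_zero_iff homog_list_def)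
  have "length dx = length xs"
    using assms(4) unfolding homog_list_def by simp
  then show "?ds ! i = ?ds ! (n - 1)" "eps (?ds ! (n - 1)) (?ds ! (n - 1)) = 1"
    using assms(3,5) length_as bicharacter_zero_left[OF bicharacter]
    by (simp_all add: nth_append)
  have "length as \<le> n - 1"
    using length_as by simp
  then show "(as @ xs @ [as ! i]) ! i = (as @ xs @ [as ! i]) ! (n - 1)"
    using assms(3,5) by (simp add: nth_append)
qed (use assms length_as in auto)

lemma prefix_filippov:
  assumes "(2::'k) \<noteq> 0" and "set as \<subseteq> G 0" and "map alpha as = as"
    and "length xs = n - length as - 1" and "length ys = n - length as"
    and "homog_list G xs dx" and "homog_list G ys dy"
  shows "br (as @ map alpha xs @ [br (as @ ys)]) =
    (\<Sum>i<n - length as. smult (eps (sum_list dx) (sum_list (take i dy)))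
        (br (as @ map alpha (take i ys) @ [br (as @ xs @ [ys ! i])] @ map alpha (drop (Suc i) ys))))"
proof -
  let ?p = "length as" and ?X = "as @ xs" and ?Y = "as @ ys"
  define summand where "summand i =
    smult (eps (sum_list (map (\<lambda>_. 0) as @ dx)) (sum_list (take i (map (\<lambda>_. 0) as @ dy))))
      (br (map alpha (take i ?Y) @ [br (?X @ [?Y ! i])] @ map alpha (drop (Suc i) ?Y)))" for i
  have "br (map alpha ?X @ [br ?Y]) = (\<Sum>i<n. summand i)"
    unfolding summand_def
    by (rule filippov) (use assms length_as in \<open>auto intro: homog_list_append simp: homog_list_zero_iff\<close>)
  also have "\<dots> = (\<Sum>i<?p. summand i) + (\<Sum>j<n - ?p. summand (?p + j))"
    using sum.atLeastLessThan_concat[of 0 ?p n summand] sum.shift_bounds_nat_ivl[of summand 0 ?p "n - ?p"]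
      length_as by (simp add: atLeast0LessThan add.commute)
  also have "(\<Sum>i<?p. summand i) = 0"
  proof (rule sum.neutral, intro ballI)
    fix i assume "i \<in> {..<?p}"
    then have "br (?X @ [?Y ! i]) = 0"
      using prefix_entry_repeated_eq_zero[OF assms(1,2,4,6)] by (simp add: nth_append)
    moreover have "br (map alpha (take i ?Y) @ [0] @ map alpha (drop (Suc i) ?Y)) = 0"
      using \<open>i \<in> {..<?p}\<close> assms(5) length_as
      by (intro bracket_eq_zero_if_zero_entry[where i = i]) (auto simp: nth_append)
    ultimately show "summand i = 0"
      unfolding summand_def by simp
  qed
  finally show ?thesis
    using assms(3) unfolding summand_def by (simp add: nth_append)
qed

end

end

theorem corollary3p7:
  fixes smult :: "'k::field_char_0 \<Rightarrow> 'v::ab_group_add \<Rightarrow> 'v"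
    and G :: "'g::ab_group_add \<Rightarrow> 'v set"
    and br :: "'v list \<Rightarrow> 'v"
    and eps :: "'g \<Rightarrow> 'g \<Rightarrow> 'k"
    and alpha :: "'v \<Rightarrow> 'v"
    and n p :: nat
    and as :: "'v list"
  assumes "hom_lie_color n smult G br eps alpha"
    and "n \<ge> 3"
    and "0 < p" and "p < n"
    and "length as = p"
    and "\<forall>i<p. as ! i \<in> G 0"
    and "\<forall>i<p. alpha (as ! i) = as ! i"
  shows "hom_lie_color (n - p) smult G (\<lambda>xs. br (as @ xs)) eps alpha"
proof -
  interpret hom_lie_color_algebra n smult G br eps alpha
    using assms(1) by unfold_locales
  have prefix_length: "length as < n"
    using assms(4,5) by simp
  have prefix_degree: "set as \<subseteq> G 0"
    using assms(5,6) by (auto simp: in_set_conv_nth)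
  have prefix_fixed: "map alpha as = as"
    using assms(5,7) by (simp add: list_eq_iff_nth_eq)
  have prefix_homog: "homog_list G as (map (\<lambda>_. 0) as)"
    using prefix_degree homog_list_zero_iff by blast
  show ?thesis
    unfolding hom_lie_color_def
    using graded_vs bicharacter linear_alpha alpha_degree assms(5)
      prefix_multilinear[OF prefix_length] prefix_bracket_degree[OF prefix_length prefix_degree]
      prefix_skew[OF prefix_length prefix_homog]
      prefix_filippov[OF prefix_length _ prefix_degree prefix_fixed]
    by simp
qed

end
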